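(* Let $G$ be a metrizable abelian topological group in which every cyclic subgroup is discrete. The following are equivalent: (i) $G$ contains a subgroup topologically isomorphic to $S_A$ for some infinite subset $A$ of $G$; (ii) $G$ is not NSS.
   Context: For $a\in G$, $\langle a\rangle$ is the cyclic subgroup generated by $a$ with the subspace topology. $S_A=\bigoplus_{a\in A}\langle a\rangle$ is the subgroup of finitely supported elements of $\prod_{a\in A}\langle a\rangle$, with the subspace topology of the Tychonoff product topology. A topological group is NSS if it has a neighbourhood of the identity containing no non-trivial subgroup. *)

theory Defs
  imports "HOL-Analysis.Analysis"
begin

definition topological_ab_group :: "('a::ab_group_add) topology \<Rightarrow> bool" where
  "topological_ab_group T \<longleftrightarrow>
     topspace T = UNIV \<and>
     continuous_map (prod_topology T T) T (\<lambda>(x, y). x + y) \<and>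
     continuous_map T T uminus"

definition add_subgroup :: "('a::ab_group_add) set \<Rightarrow> bool" where
  "add_subgroup H \<longleftrightarrow> 0 \<in> H \<and> (\<forall>x\<in>H. \<forall>y\<in>H. x + y \<in> H) \<and> (\<forall>x\<in>H. - x \<in> H)"

definition cyclic :: "('a::ab_group_add) \<Rightarrow> 'a set" where
  "cyclic a = {(\<Sum>i<n. a) | n::nat. True} \<union> {- (\<Sum>i<n. a) | n::nat. True}"

definition NSS :: "('a::ab_group_add) topology \<Rightarrow> bool" where
  "NSS T \<longleftrightarrow> (\<exists>U. (\<exists>V. openin T V \<and> 0 \<in> V \<and> V \<subseteq> U) \<and>
                 (\<forall>H. add_subgroup H \<and> H \<subseteq> U \<longrightarrow> H = {0}))"

text \<open>S_A: finitely supported elements of the product of the cyclic subgroups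
  (elements are extensional functions on A), with the subspace topology of the
  Tychonoff product of the subspace topologies, and pointwise addition.\<close>
definition S_carrier :: "('a::ab_group_add) set \<Rightarrow> ('a \<Rightarrow> 'a) set" where
  "S_carrier A = {f \<in> PiE A cyclic. finite {a \<in> A. f a \<noteq> 0}}"

definition S_topology :: "('a::ab_group_add) topology \<Rightarrow> 'a set \<Rightarrow> ('a \<Rightarrow> 'a) topology" where
  "S_topology T A = subtopology (product_topology (\<lambda>a. subtopology T (cyclic a)) A) (S_carrier A)"

definition S_add :: "('a::ab_group_add) set \<Rightarrow> ('a \<Rightarrow> 'a) \<Rightarrow> ('a \<Rightarrow> 'a) \<Rightarrow> ('a \<Rightarrow> 'a)" where
  "S_add A f g = restrict (\<lambda>a. f a + g a) A"

text \<open>G contains a subgroup topologically isomorphic to S_A: an injective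
  homomorphism from S_A into G that is a homeomorphism onto its image
  (with the subspace topology); its image is then a subgroup of G.\<close>
definition contains_S :: "('a::ab_group_add) topology \<Rightarrow> 'a set \<Rightarrow> bool" where
  "contains_S T A \<longleftrightarrow> (\<exists>\<phi>.
      (\<forall>f\<in>S_carrier A. \<forall>g\<in>S_carrier A. \<phi> (S_add A f g) = \<phi> f + \<phi> g) \<and>
      inj_on \<phi> (S_carrier A) \<and>
      homeomorphic_map (S_topology T A) (subtopology T (\<phi> ` S_carrier A)) \<phi>)"

end

theory Submission
  imports Defs
begin

text \<open>If G contains a copy of S_A with A infinite, the preimage of a neighbourhood of 0 contains
  a subgroup of S_A of the form {f. f vanishes on a finite set F}; it is nontrivial and so is its
  image, hence G is not NSS.

  Conversely, if G is not NSS, choose inductively elements a_k \<noteq> 0 and open neighbourhoods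
  U_k of 0 shrinking to 0 with \<langle>a_k\<rangle> \<subseteq> U_k, U_(k+1) + U_(k+1) \<subseteq> U_k, and
  U_(k+1) + U_(k+1) + U_(k+1) meeting \<langle>a_k\<rangle> only in 0 (possible because \<langle>a_k\<rangle> is discrete).
  For A = {a_k} the map \<phi> f = \<Sum>_k f(a_k) is a topological embedding of S_A: a tail
  \<Sum>_(k\<ge>n) f(a_k) lies in U_n + U_n, which gives continuity, and at the first index j where f and
  g differ the separation property recovers f(a_j) - g(a_j) from \<phi> f - \<phi> g, which gives
  injectivity and openness.\<close>

lemma cyclic_iff: "y \<in> cyclic x \<longleftrightarrow> (\<exists>n::nat. y = (\<Sum>i<n. x) \<or> y = - (\<Sum>i<n. x))"
  unfolding cyclic_def by auto

lemma sum_const_lessThan_add: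
  fixes x :: "'a::ab_group_add" and m n :: nat
  shows "(\<Sum>i<m + n. x) = (\<Sum>i<m. x) + (\<Sum>i<n. x)"
  by (induction n) (simp_all add: add.assoc)

lemma sum_const_lessThan_diff_in_cyclic:
  fixes m n :: nat
  shows "(\<Sum>i<m. x) - (\<Sum>i<n. x) \<in> cyclic x"
proof (cases "n \<le> m")
  case True
  then have "(\<Sum>i<m. x) = (\<Sum>i<m - n. x) + (\<Sum>i<n. x)"
    using sum_const_lessThan_add[where m="m - n" and n=n and x=x] by simp
  then show ?thesis unfolding cyclic_iff by (intro exI[of _ "m - n"]) simp
next
  case False
  then have "(\<Sum>i<n. x) = (\<Sum>i<n - m. x) + (\<Sum>i<m. x)"
    using sum_const_lessThan_add[where m="n - m" and n=m and x=x] by simp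
  then show ?thesis unfolding cyclic_iff by (intro exI[of _ "n - m"]) simp
qed

lemma zero_in_cyclic: "0 \<in> cyclic x"
  unfolding cyclic_iff by (intro exI[of _ "0::nat"]) simp

lemma self_in_cyclic: "x \<in> cyclic x"
  unfolding cyclic_iff by (intro exI[of _ "1::nat"]) simp

lemma minus_in_cyclic: "y \<in> cyclic x \<Longrightarrow> - y \<in> cyclic x"
  by (auto simp: cyclic_iff)

lemma add_in_cyclic:
  assumes "y \<in> cyclic x" "z \<in> cyclic x"
  shows "y + z \<in> cyclic x"
proof -
  obtain m n :: nat where y: "y = (\<Sum>i<m. x) \<or> y = - (\<Sum>i<m. x)"
    and z: "z = (\<Sum>i<n. x) \<or> z = - (\<Sum>i<n. x)"
    using assms unfolding cyclic_iff by blast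
  have "(\<Sum>i<m. x) + (\<Sum>i<n. x) \<in> cyclic x"
    unfolding cyclic_iff sum_const_lessThan_add[symmetric] by blast
  then show ?thesis
    using y z minus_in_cyclic[of "(\<Sum>i<m. x) + (\<Sum>i<n. x)"]
      sum_const_lessThan_diff_in_cyclic[where m=m and n=n and x=x]
      sum_const_lessThan_diff_in_cyclic[where m=n and n=m and x=x]
    by (auto simp: add.commute)
qed

lemma diff_in_cyclic: "y \<in> cyclic x \<Longrightarrow> z \<in> cyclic x \<Longrightarrow> y - z \<in> cyclic x"
  using add_in_cyclic minus_in_cyclic by (metis diff_conv_add_uminus)

lemma cyclic_subset_add_subgroup:
  assumes "add_subgroup H" "x \<in> H"
  shows "cyclic x \<subseteq> H"
proof -
  have "(\<Sum>i<n. x) \<in> H" for n :: nat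
    by (induction n) (use assms in \<open>auto simp: add_subgroup_def\<close>)
  then show ?thesis
    using assms(1) by (auto simp: cyclic_iff add_subgroup_def)
qed

lemma topspace_topological_ab_group: "topological_ab_group T \<Longrightarrow> topspace T = UNIV"
  by (simp add: topological_ab_group_def)

lemma openin_translation_preimage:
  assumes "topological_ab_group T" "openin T V"
  shows "openin T {x. c + x \<in> V}"
proof -
  have add: "continuous_map (prod_topology T T) T (\<lambda>(x, y). x + y)"
    and top: "topspace T = UNIV"
    using assms(1) by (auto simp: topological_ab_group_def)
  have "continuous_map T (prod_topology T T) (\<lambda>x. (c, x))"
    by (intro continuous_map_pairedI continuous_map_id[unfolded id_def]) (simp add: top)
  from continuous_map_compose[OF this add] have "continuous_map T T (\<lambda>x. c + x)"
    by (simp add: o_def)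
  from openin_continuous_map_preimage[OF this assms(2)] show ?thesis
    by (simp add: top)
qed

lemma topological_ab_group_half_neighbourhood:
  assumes "topological_ab_group T" "openin T V" "0 \<in> V"
  obtains W where "openin T W" "0 \<in> W" "\<And>x y. x \<in> W \<Longrightarrow> y \<in> W \<Longrightarrow> x + y \<in> V"
proof -
  have add: "continuous_map (prod_topology T T) T (\<lambda>(x, y). x + y)"
    and top: "topspace T = UNIV"
    using assms(1) by (auto simp: topological_ab_group_def)
  define S where "S = {p \<in> topspace (prod_topology T T). (\<lambda>(x, y). x + y) p \<in> V}"
  have "openin (prod_topology T T) S"
    unfolding S_def by (rule openin_continuous_map_preimage[OF add assms(2)])
  moreover have "(0, 0) \<in> S"
    using assms(3) by (simp add: S_def top)
  ultimately have "\<exists>W1 W2. openin T W1 \<and> openin T W2 \<and> 0 \<in> W1 \<and> 0 \<in> W2 \<and> W1 \<times> W2 \<subseteq> S"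
    by (rule openin_prod_topology_alt[THEN iffD1, rule_format])
  then obtain W1 W2 where "openin T W1" "openin T W2" "0 \<in> W1" "0 \<in> W2" "W1 \<times> W2 \<subseteq> S"
    by blast
  then show thesis
    by (intro that[of "W1 \<inter> W2"]) (auto simp: S_def)
qed

lemma first_countable_nat_neighbourhood_base:
  assumes "first_countable X" "x \<in> topspace X"
  obtains B :: "nat \<Rightarrow> 'a set"
  where "\<And>n. openin X (B n)" "\<And>n. x \<in> B n"
    "\<And>V. openin X V \<Longrightarrow> x \<in> V \<Longrightarrow> \<exists>n. B n \<subseteq> V"
proof -
  obtain \<B> where "countable \<B>" "\<forall>V\<in>\<B>. openin X V"
    and base: "\<And>V. openin X V \<Longrightarrow> x \<in> V \<Longrightarrow> \<exists>W\<in>\<B>. x \<in> W \<and> W \<subseteq> V"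
    using assms unfolding first_countable_def by meson
  define \<B>x where "\<B>x = {V\<in>\<B>. x \<in> V}"
  have "\<B>x \<noteq> {}"
    using base[OF openin_topspace assms(2)] by (auto simp: \<B>x_def)
  moreover have "countable \<B>x"
    using \<open>countable \<B>\<close> by (simp add: \<B>x_def)
  ultimately have in_base: "from_nat_into \<B>x n \<in> \<B>x" and range: "range (from_nat_into \<B>x) = \<B>x" for n
    by (simp_all add: from_nat_into range_from_nat_into)
  show thesis
  proof (rule that)
    show "openin X (from_nat_into \<B>x n)" "x \<in> from_nat_into \<B>x n" for n
      using in_base[of n] \<open>\<forall>V\<in>\<B>. openin X V\<close> by (auto simp: \<B>x_def)
    show "\<exists>n. from_nat_into \<B>x n \<subseteq> V" if V: "openin X V" "x \<in> V" for V
    proof -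
      obtain W where "W \<in> \<B>x" "W \<subseteq> V"
        using base[OF V] by (auto simp: \<B>x_def)
      moreover from \<open>W \<in> \<B>x\<close> obtain n where "W = from_nat_into \<B>x n"
        using range by blast
      ultimately show ?thesis
        by blast
    qed
  qed
qed

definition S_zero :: "('a::ab_group_add) set \<Rightarrow> 'a \<Rightarrow> 'a" where
  "S_zero A = restrict (\<lambda>_. 0) A"

definition S_neg :: "('a::ab_group_add) set \<Rightarrow> ('a \<Rightarrow> 'a) \<Rightarrow> 'a \<Rightarrow> 'a" where
  "S_neg A f = restrict (\<lambda>b. - f b) A"

definition cylinder :: "('a::ab_group_add) set \<Rightarrow> ('a \<Rightarrow> 'a) \<Rightarrow> 'a set \<Rightarrow> ('a \<Rightarrow> 'a) set" where
  "cylinder A f F = {g \<in> S_carrier A. \<forall>b\<in>F. g b = f b}"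

lemma S_carrier_apply: "f \<in> S_carrier A \<Longrightarrow> b \<in> A \<Longrightarrow> f b \<in> cyclic b"
  by (auto simp: S_carrier_def)

lemma S_zero_mem: "S_zero A \<in> S_carrier A"
  by (simp add: S_zero_def S_carrier_def zero_in_cyclic)

lemma S_neg_mem:
  assumes "f \<in> S_carrier A"
  shows "S_neg A f \<in> S_carrier A"
proof -
  have "{b \<in> A. S_neg A f b \<noteq> 0} = {b \<in> A. f b \<noteq> 0}"
    by (auto simp: S_neg_def)
  then show ?thesis
    using assms by (auto simp: S_neg_def S_carrier_def intro: minus_in_cyclic PiE_mem)
qed

lemma S_add_mem:
  assumes "f \<in> S_carrier A" "g \<in> S_carrier A"
  shows "S_add A f g \<in> S_carrier A"
proof -
  have "{b \<in> A. S_add A f g b \<noteq> 0} \<subseteq> {b \<in> A. f b \<noteq> 0} \<union> {b \<in> A. g b \<noteq> 0}"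
    by (auto simp: S_add_def)
  moreover have "finite ({b \<in> A. f b \<noteq> 0} \<union> {b \<in> A. g b \<noteq> 0})"
    using assms by (simp add: S_carrier_def)
  ultimately have "finite {b \<in> A. S_add A f g b \<noteq> 0}"
    by (rule finite_subset)
  then show ?thesis
    using assms by (auto simp: S_add_def S_carrier_def intro: add_in_cyclic PiE_mem)
qed

lemma S_hom_zero:
  fixes \<phi> :: "('a::ab_group_add \<Rightarrow> 'a) \<Rightarrow> 'b::ab_group_add"
  assumes "\<forall>f\<in>S_carrier A. \<forall>g\<in>S_carrier A. \<phi> (S_add A f g) = \<phi> f + \<phi> g"
  shows "\<phi> (S_zero A) = 0"
proof -
  have "S_add A (S_zero A) (S_zero A) = S_zero A"
    by (auto simp: S_add_def S_zero_def)
  moreover have "\<phi> (S_add A (S_zero A) (S_zero A)) = \<phi> (S_zero A) + \<phi> (S_zero A)"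
    using assms S_zero_mem by blast
  ultimately show ?thesis
    by simp
qed

lemma S_hom_neg:
  fixes \<phi> :: "('a::ab_group_add \<Rightarrow> 'a) \<Rightarrow> 'b::ab_group_add"
  assumes hom: "\<forall>f\<in>S_carrier A. \<forall>g\<in>S_carrier A. \<phi> (S_add A f g) = \<phi> f + \<phi> g"
    and "f \<in> S_carrier A"
  shows "\<phi> (S_neg A f) = - \<phi> f"
proof -
  have "S_add A (S_neg A f) f = S_zero A"
    by (auto simp: S_add_def S_neg_def S_zero_def)
  moreover have "\<phi> (S_add A (S_neg A f) f) = \<phi> (S_neg A f) + \<phi> f"
    using hom S_neg_mem[OF assms(2)] assms(2) by blast
  ultimately have "\<phi> (S_neg A f) + \<phi> f = 0"
    using S_hom_zero[OF hom] by simp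
  then show ?thesis
    by (simp add: eq_neg_iff_add_eq_0)
qed

lemma topspace_S_topology:
  assumes "topspace T = UNIV"
  shows "topspace (S_topology T A) = S_carrier A"
  using assms by (auto simp: S_topology_def S_carrier_def)

lemma openin_S_topology_cylinder:
  assumes top: "topspace T = UNIV"
    and discrete: "\<And>b. subtopology T (cyclic b) = discrete_topology (cyclic b)"
    and f: "f \<in> S_carrier A" and "finite F" "F \<subseteq> A"
  shows "openin (S_topology T A) (cylinder A f F)"
  using \<open>finite F\<close> \<open>F \<subseteq> A\<close>
proof (induction F rule: finite_induct)
  case empty
  then show ?case
    using openin_topspace[of "S_topology T A"] by (simp add: cylinder_def topspace_S_topology[OF top])
next
  case (insert b F)
  have "continuous_map (S_topology T A) (subtopology T (cyclic b)) (\<lambda>g. g b)"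
    unfolding S_topology_def
    by (intro continuous_map_from_subtopology continuous_map_product_projection) (use insert in auto)
  moreover have "openin (subtopology T (cyclic b)) {f b}"
    using S_carrier_apply[OF f] insert.prems by (simp add: discrete)
  ultimately have "openin (S_topology T A) {g \<in> topspace (S_topology T A). g b \<in> {f b}}"
    by (rule openin_continuous_map_preimage)
  then have "openin (S_topology T A) (cylinder A f F \<inter> {g \<in> S_carrier A. g b = f b})"
    using insert by (intro openin_Int) (auto simp: topspace_S_topology[OF top])
  moreover have "cylinder A f F \<inter> {g \<in> S_carrier A. g b = f b} = cylinder A f (insert b F)"
    by (auto simp: cylinder_def)
  ultimately show ?case
    by simp
qed

text \<open>Basic open sets of a product restrict only finitely many coordinates, and on the
  remaining ones every finitely supported element already lies in the factor.\<close>
lemma S_topology_cylinder_subset: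
  assumes top: "topspace T = UNIV"
    and N: "openin (S_topology T A) N" and "f \<in> N"
  obtains F where "finite F" "F \<subseteq> A" "cylinder A f F \<subseteq> N"
proof -
  let ?P = "product_topology (\<lambda>b. subtopology T (cyclic b)) A"
  obtain Q where Q: "openin ?P Q" "N = Q \<inter> S_carrier A"
    using N unfolding S_topology_def openin_subtopology by blast
  then obtain W where W: "finite {b \<in> A. W b \<noteq> topspace (subtopology T (cyclic b))}"
    "f \<in> PiE A W" "PiE A W \<subseteq> Q"
    using \<open>f \<in> N\<close> unfolding openin_product_topology_alt by blast
  define F where "F = {b \<in> A. W b \<noteq> cyclic b}"
  have "cylinder A f F \<subseteq> PiE A W"
    using W(2) by (force simp: cylinder_def F_def S_carrier_def PiE_iff)
  then have "cylinder A f F \<subseteq> N"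
    using W(3) Q(2) by (auto simp: cylinder_def)
  moreover have "finite F"
    using W(1) by (simp add: F_def top)
  ultimately show thesis
    by (intro that[of F]) (auto simp: F_def)
qed

lemma add_subgroup_hom_image_cylinder:
  fixes \<phi> :: "('a::ab_group_add \<Rightarrow> 'a) \<Rightarrow> 'b::ab_group_add"
  assumes hom: "\<forall>f\<in>S_carrier A. \<forall>g\<in>S_carrier A. \<phi> (S_add A f g) = \<phi> f + \<phi> g"
  shows "add_subgroup (\<phi> ` cylinder A (S_zero A) F)"
  unfolding add_subgroup_def
proof (intro conjI ballI)
  let ?K = "cylinder A (S_zero A) F"
  show "0 \<in> \<phi> ` ?K"
    using S_hom_zero[OF hom] S_zero_mem by (force simp: cylinder_def)
  show "x + y \<in> \<phi> ` ?K" if xy: "x \<in> \<phi> ` ?K" "y \<in> \<phi> ` ?K" for x y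
  proof -
    obtain f g where "f \<in> ?K" "g \<in> ?K" "x = \<phi> f" "y = \<phi> g"
      using xy by blast
    moreover have "S_add A f g \<in> ?K"
      using \<open>f \<in> ?K\<close> \<open>g \<in> ?K\<close> S_add_mem by (auto simp: cylinder_def S_add_def S_zero_def)
    ultimately show ?thesis
      using hom by (metis (no_types, lifting) cylinder_def image_eqI mem_Collect_eq)
  qed
  show "- x \<in> \<phi> ` ?K" if x: "x \<in> \<phi> ` ?K" for x
  proof -
    obtain f where "f \<in> ?K" "x = \<phi> f"
      using x by blast
    moreover have "S_neg A f \<in> ?K"
      using \<open>f \<in> ?K\<close> S_neg_mem by (auto simp: cylinder_def S_neg_def S_zero_def)
    ultimately show ?thesis
      using S_hom_neg[OF hom] by (metis (no_types, lifting) cylinder_def image_eqI mem_Collect_eq)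
  qed
qed

lemma cylinder_zero_nontrivial:
  assumes "infinite A" "finite F"
  obtains e where "e \<in> cylinder A (S_zero A) F" "e \<noteq> S_zero A"
proof -
  obtain b where b: "b \<in> A" "b \<notin> F" "b \<noteq> 0"
    using infinite_remove[OF assms(1), of 0] \<open>finite F\<close>
    by (metis Diff_iff finite_Diff2 finite.emptyI insertI1 ex_in_conv)
  define e where "e = restrict (\<lambda>c. if c = b then b else 0) A"
  have "{c \<in> A. e c \<noteq> 0} \<subseteq> {b}"
    by (auto simp: e_def)
  then have "e \<in> S_carrier A"
    using finite_subset by (fastforce simp: e_def S_carrier_def self_in_cyclic zero_in_cyclic)
  then have "e \<in> cylinder A (S_zero A) F"
    using b by (auto simp: cylinder_def e_def S_zero_def)
  moreover have "e b \<noteq> S_zero A b"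
    using b by (simp add: e_def S_zero_def)
  ultimately show thesis
    using that by blast
qed

lemma contains_S_imp_not_NSS:
  assumes tg: "topological_ab_group T" and "infinite A" and "contains_S T A"
  shows "\<not> NSS T"
proof
  assume "NSS T"
  then obtain U V where V: "openin T V" "0 \<in> V" "V \<subseteq> U"
    and no_subgroup: "\<And>H. add_subgroup H \<Longrightarrow> H \<subseteq> U \<Longrightarrow> H = {0}"
    unfolding NSS_def by blast
  obtain \<phi> where hom: "\<forall>f\<in>S_carrier A. \<forall>g\<in>S_carrier A. \<phi> (S_add A f g) = \<phi> f + \<phi> g"
    and inj: "inj_on \<phi> (S_carrier A)"
    and homeo: "homeomorphic_map (S_topology T A) (subtopology T (\<phi> ` S_carrier A)) \<phi>"
    using \<open>contains_S T A\<close> unfolding contains_S_def by blast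
  have top: "topspace T = UNIV"
    using tg by (rule topspace_topological_ab_group)
  have "continuous_map (S_topology T A) T \<phi>"
    using homeomorphic_imp_continuous_map[OF homeo] by (simp add: continuous_map_in_subtopology)
  from openin_continuous_map_preimage[OF this V(1)]
  have "openin (S_topology T A) {f \<in> S_carrier A. \<phi> f \<in> V}"
    by (simp add: topspace_S_topology[OF top])
  moreover have "S_zero A \<in> {f \<in> S_carrier A. \<phi> f \<in> V}"
    using S_zero_mem S_hom_zero[OF hom] V(2) by simp
  ultimately obtain F where "finite F"
    and F: "cylinder A (S_zero A) F \<subseteq> {f \<in> S_carrier A. \<phi> f \<in> V}"
    using S_topology_cylinder_subset[OF top] by metis
  have image_trivial: "\<phi> ` cylinder A (S_zero A) F = {0}"
    using no_subgroup add_subgroup_hom_image_cylinder[OF hom] F V(3) by blast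
  obtain e where e: "e \<in> cylinder A (S_zero A) F" "e \<noteq> S_zero A"
    using cylinder_zero_nontrivial[OF \<open>infinite A\<close> \<open>finite F\<close>] .
  from imageI[OF e(1), of \<phi>] have "\<phi> e = \<phi> (S_zero A)"
    unfolding image_trivial S_hom_zero[OF hom] by simp
  then show False
    using inj_onD[OF inj] e S_zero_mem by (auto simp: cylinder_def)
qed

locale separating_sequence =
  fixes T :: "('a::ab_group_add) topology" and U :: "nat \<Rightarrow> 'a set" and a :: "nat \<Rightarrow> 'a"
  assumes topological_group: "topological_ab_group T"
    and discrete_cyclic: "\<And>x. subtopology T (cyclic x) = discrete_topology (cyclic x)"
    and openin_U: "\<And>k. openin T (U k)"
    and zero_in_U: "\<And>k. 0 \<in> U k"
    and a_nonzero: "\<And>k. a k \<noteq> 0"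
    and cyclic_a_subset_U: "\<And>k. cyclic (a k) \<subseteq> U k"
    and U_Suc_add: "\<And>k x y. x \<in> U (Suc k) \<Longrightarrow> y \<in> U (Suc k) \<Longrightarrow> x + y \<in> U k"
    and U_Suc_separates: "\<And>k x y z. x \<in> U (Suc k) \<Longrightarrow> y \<in> U (Suc k) \<Longrightarrow> z \<in> U (Suc k) \<Longrightarrow>
      x + (y + z) \<in> cyclic (a k) \<Longrightarrow> x + (y + z) = 0"
    and U_shrinks: "\<And>V. openin T V \<Longrightarrow> 0 \<in> V \<Longrightarrow> \<exists>k. U k \<subseteq> V"
begin

abbreviation S :: "('a \<Rightarrow> 'a) set" where
  "S \<equiv> S_carrier (range a)"

lemma topspace_UNIV: "topspace T = UNIV"
  using topological_group by (rule topspace_topological_ab_group)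

lemma U_antimono: "k \<le> m \<Longrightarrow> U m \<subseteq> U k"
proof (rule lift_Suc_antimono_le[of U])
  show "U (Suc k) \<subseteq> U k" for k
    using U_Suc_add[OF _ zero_in_U] by fastforce
qed

text \<open>Induction peeling off the smallest index n: the remaining sum lies in
  U (n+1) + U (n+1) \<subseteq> U n.\<close>
lemma sum_in_U_plus_U:
  assumes "finite J" "J \<subseteq> {n..}" "\<And>j. j \<in> J \<Longrightarrow> x j \<in> U j"
  shows "\<exists>p\<in>U n. \<exists>q\<in>U n. sum x J = p + q"
proof -
  have bounded: "\<exists>p\<in>U n. \<exists>q\<in>U n. sum x J = p + q"
    if "J \<subseteq> {n..<n + d}" "\<forall>j\<in>J. x j \<in> U j" for d n J
    using that
  proof (induction d arbitrary: n J)
    case 0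
    then show ?case
      using zero_in_U by force
  next
    case (Suc d)
    have "J - {n} \<subseteq> {Suc n..<Suc n + d}"
      using Suc.prems(1) by auto
    then obtain p q where pq: "p \<in> U (Suc n)" "q \<in> U (Suc n)" "sum x (J - {n}) = p + q"
      using Suc.IH Suc.prems(2) by blast
    then have rest: "sum x (J - {n}) \<in> U n"
      using U_Suc_add by simp
    have "finite J"
      using Suc.prems(1) finite_subset by blast
    show ?case
    proof (cases "n \<in> J")
      case True
      then have "sum x J = x n + sum x (J - {n})"
        using \<open>finite J\<close> by (simp add: sum.remove)
      then show ?thesis
        using rest True Suc.prems(2) by blast
    next
      case False
      then show ?thesis
        using rest zero_in_U by (metis Diff_empty Diff_insert0 add.right_neutral)
    qed
  qed
  obtain d where "J \<subseteq> {..<d}"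
    using finite_nat_bounded[OF assms(1)] by blast
  with assms(2) have "J \<subseteq> {n..<n + d}"
    by (auto simp: subset_eq)
  then show ?thesis
    using bounded assms(3) by blast
qed

lemma inj_a: "inj a"
proof (rule linorder_injI)
  fix j k :: nat
  assume "j < k"
  have "a k \<in> U (Suc j)"
    using cyclic_a_subset_U self_in_cyclic U_antimono \<open>j < k\<close> by (meson Suc_leI subsetD)
  then have "a k \<noteq> 0 \<Longrightarrow> a k \<notin> cyclic (a j)"
    using U_Suc_separates[of "a k" j 0 0] zero_in_U by auto
  then show "a j \<noteq> a k"
    using a_nonzero self_in_cyclic by metis
qed

lemma S_coordinate: "f \<in> S \<Longrightarrow> f (a i) \<in> cyclic (a i)"
  by (simp add: S_carrier_apply)

lemma S_eqI: "f \<in> S \<Longrightarrow> g \<in> S \<Longrightarrow> (\<And>i. f (a i) = g (a i)) \<Longrightarrow> f = g"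
  unfolding S_carrier_def by (rule PiE_ext[of f "range a" cyclic]) auto

lemma finite_support: "f \<in> S \<Longrightarrow> finite {i. f (a i) \<noteq> 0}"
proof -
  assume "f \<in> S"
  then have "finite (a -` {b \<in> range a. f b \<noteq> 0})"
    using inj_a by (intro finite_vimageI) (simp_all add: S_carrier_def)
  moreover have "a -` {b \<in> range a. f b \<noteq> 0} = {i. f (a i) \<noteq> 0}"
    by auto
  ultimately show ?thesis
    by simp
qed

definition phi :: "('a \<Rightarrow> 'a) \<Rightarrow> 'a" where
  "phi f = (\<Sum>i | f (a i) \<noteq> 0. f (a i))"

lemma phi_eq_sum: "finite I \<Longrightarrow> {i. f (a i) \<noteq> 0} \<subseteq> I \<Longrightarrow> phi f = (\<Sum>i\<in>I. f (a i))"
  unfolding phi_def by (rule sum.mono_neutral_left) auto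

lemma phi_diff_eq_sum:
  assumes "finite I" "{i. f (a i) \<noteq> 0} \<subseteq> I" "{i. g (a i) \<noteq> 0} \<subseteq> I"
  shows "phi f - phi g = (\<Sum>i\<in>I. f (a i) - g (a i))"
  using phi_eq_sum[OF assms(1,2)] phi_eq_sum[OF assms(1,3)] by (simp add: sum_subtractf)

lemma phi_S_add:
  assumes "f \<in> S" "g \<in> S"
  shows "phi (S_add (range a) f g) = phi f + phi g"
proof -
  define I where "I = {i. f (a i) \<noteq> 0} \<union> {i. g (a i) \<noteq> 0}"
  have "finite I"
    using finite_support assms by (simp add: I_def)
  then have "phi (S_add (range a) f g) = (\<Sum>i\<in>I. f (a i) + g (a i))"
    by (subst phi_eq_sum[of I]) (auto simp: I_def S_add_def)
  also have "\<dots> = phi f + phi g"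
    using phi_eq_sum[OF \<open>finite I\<close>, of f] phi_eq_sum[OF \<open>finite I\<close>, of g]
    by (simp add: sum.distrib I_def)
  finally show ?thesis .
qed

lemma phi_diff_in_U_if_agree:
  assumes "f \<in> S" "g \<in> S" "\<And>i. i \<le> k \<Longrightarrow> f (a i) = g (a i)"
  shows "phi f - phi g \<in> U k"
proof -
  define I where "I = {i. f (a i) \<noteq> 0} \<union> {i. g (a i) \<noteq> 0}"
  have "finite I"
    using finite_support assms by (simp add: I_def)
  have "phi f - phi g = (\<Sum>i\<in>I. f (a i) - g (a i))"
    using \<open>finite I\<close> by (rule phi_diff_eq_sum) (auto simp: I_def)
  also have "\<dots> = (\<Sum>i\<in>{i\<in>I. Suc k \<le> i}. f (a i) - g (a i))"
    using \<open>finite I\<close> assms(3) by (intro sum.mono_neutral_right) (auto simp: not_less_eq_eq[symmetric])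
  finally obtain p q where "p \<in> U (Suc k)" "q \<in> U (Suc k)" "phi f - phi g = p + q"
    using sum_in_U_plus_U[of "{i\<in>I. Suc k \<le> i}" "Suc k" "\<lambda>i. f (a i) - g (a i)"] \<open>finite I\<close>
      cyclic_a_subset_U diff_in_cyclic S_coordinate assms(1,2) by fastforce
  then show ?thesis
    using U_Suc_add by simp
qed

text \<open>If j is the first coordinate where f and g differ, then f (a j) - g (a j) is a nonzero
  element of cyclic (a j) equal to (phi f - phi g) plus a tail sum in U (j+1) + U (j+1);
  the separation property of U (j+1) forbids phi f - phi g \<in> U (j+1).\<close>
lemma phi_diff_notin_U:
  assumes f: "f \<in> S" and g: "g \<in> S" and differ: "f (a j) \<noteq> g (a j)"
    and agree: "\<And>i. i < j \<Longrightarrow> f (a i) = g (a i)"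
  shows "phi f - phi g \<notin> U (Suc j)"
proof
  assume diff_in_U: "phi f - phi g \<in> U (Suc j)"
  define d where "d i = f (a i) - g (a i)" for i
  define I where "I = {i. f (a i) \<noteq> 0} \<union> {i. g (a i) \<noteq> 0} \<union> {j}"
  define J where "J = {i\<in>I. j < i}"
  have "finite I"
    using finite_support f g by (simp add: I_def)
  have "phi f - phi g = sum d I"
    unfolding d_def using \<open>finite I\<close> by (rule phi_diff_eq_sum) (auto simp: I_def)
  also have "\<dots> = d j + sum d (I - {j})"
    using \<open>finite I\<close> by (rule sum.remove) (simp add: I_def)
  also have "sum d (I - {j}) = sum d J"
    using \<open>finite I\<close> agree
    by (intro sum.mono_neutral_right) (auto simp: J_def d_def, metis linorder_neqE_nat)
  finally have "d j = (phi f - phi g) + sum (\<lambda>i. - d i) J"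
    by (simp add: sum_negf algebra_simps)
  moreover obtain p q where "p \<in> U (Suc j)" "q \<in> U (Suc j)" "sum (\<lambda>i. - d i) J = p + q"
    using sum_in_U_plus_U[of J "Suc j" "\<lambda>i. - d i"] \<open>finite I\<close> cyclic_a_subset_U minus_in_cyclic
      diff_in_cyclic S_coordinate f g by (fastforce simp: J_def d_def)
  moreover have "d j \<in> cyclic (a j)"
    unfolding d_def using S_coordinate f g diff_in_cyclic by blast
  ultimately have "d j = 0"
    using U_Suc_separates[OF diff_in_U] by simp
  then show False
    using differ by (simp add: d_def)
qed

lemma agree_if_phi_diff_in_U:
  assumes f: "f \<in> S" and g: "g \<in> S" and "phi f - phi g \<in> U k" and "i < k"
  shows "f (a i) = g (a i)"
proof (rule ccontr)
  assume "f (a i) \<noteq> g (a i)"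
  then obtain j where j: "f (a j) \<noteq> g (a j)" "\<And>i. i < j \<Longrightarrow> f (a i) = g (a i)" "j \<le> i"
    using exists_least_iff[of "\<lambda>i. f (a i) \<noteq> g (a i)"] by (metis not_le)
  have "U k \<subseteq> U (Suc j)"
    using U_antimono \<open>i < k\<close> \<open>j \<le> i\<close> by simp
  then show False
    using phi_diff_notin_U[OF f g j(1,2)] \<open>phi f - phi g \<in> U k\<close> by blast
qed

lemma inj_on_phi: "inj_on phi S"
proof (rule inj_onI)
  fix f g
  assume "f \<in> S" "g \<in> S" "phi f = phi g"
  then show "f = g"
    using agree_if_phi_diff_in_U[of f g "Suc _"] zero_in_U S_eqI by (metis lessI right_minus_eq)
qed

lemma mem_cylinder_range_a:
  "g \<in> cylinder (range a) f (a ` {..<k}) \<longleftrightarrow> g \<in> S \<and> (\<forall>i<k. g (a i) = f (a i))"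
  by (auto simp: cylinder_def)

lemma openin_cylinder_range_a:
  "f \<in> S \<Longrightarrow> openin (S_topology T (range a)) (cylinder (range a) f (a ` {..<k}))"
  by (intro openin_S_topology_cylinder[OF topspace_UNIV discrete_cyclic]) auto

lemma continuous_map_phi: "continuous_map (S_topology T (range a)) T phi"
  unfolding continuous_map_eq_topcontinuous_at topcontinuous_at_def
proof (intro ballI conjI allI impI)
  fix f V
  assume "f \<in> topspace (S_topology T (range a))" and V: "openin T V \<and> phi f \<in> V"
  then have f: "f \<in> S"
    by (simp add: topspace_S_topology[OF topspace_UNIV])
  obtain k where k: "U k \<subseteq> {x. phi f + x \<in> V}"
    using U_shrinks openin_translation_preimage[OF topological_group] V by force
  have "phi g \<in> V" if "g \<in> cylinder (range a) f (a ` {..<Suc k})" for g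
  proof -
    have "phi g - phi f \<in> U k"
      using that f by (intro phi_diff_in_U_if_agree) (auto simp: mem_cylinder_range_a)
    then show ?thesis
      using k by auto
  qed
  moreover have "f \<in> cylinder (range a) f (a ` {..<Suc k})"
    using f by (simp add: mem_cylinder_range_a)
  ultimately show "\<exists>W. openin (S_topology T (range a)) W \<and> f \<in> W \<and> (\<forall>g\<in>W. phi g \<in> V)"
    using openin_cylinder_range_a[OF f] by blast
qed (simp_all add: topspace_UNIV)

lemma open_map_phi: "open_map (S_topology T (range a)) (subtopology T (phi ` S)) phi"
  unfolding open_map_def
proof (intro allI impI)
  fix N
  assume N: "openin (S_topology T (range a)) N"
  have "N \<subseteq> S"
    using openin_subset[OF N] by (simp add: topspace_S_topology[OF topspace_UNIV])
  show "openin (subtopology T (phi ` S)) (phi ` N)"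
  proof (subst openin_subopen, intro ballI)
    fix y
    assume "y \<in> phi ` N"
    then obtain f where "f \<in> N" "y = phi f"
      by blast
    then have f: "f \<in> S"
      using \<open>N \<subseteq> S\<close> by blast
    obtain F where "finite F" "F \<subseteq> range a" and F: "cylinder (range a) f F \<subseteq> N"
      using S_topology_cylinder_subset[OF topspace_UNIV N \<open>f \<in> N\<close>] by blast
    then obtain k where "F \<subseteq> a ` {..<k}"
      using finite_nat_bounded[OF finite_vimageI[OF \<open>finite F\<close> inj_a]] by (fastforce simp: subset_iff)
    then have "cylinder (range a) f (a ` {..<k}) \<subseteq> N"
      using F by (force simp: cylinder_def)
    define W where "W = {x. - phi f + x \<in> U k} \<inter> phi ` S"
    have "W \<subseteq> phi ` N"
    proof
      fix z
      assume "z \<in> W"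
      then obtain g where g: "g \<in> S" "z = phi g" "phi g - phi f \<in> U k"
        by (auto simp: W_def)
      then have "g \<in> cylinder (range a) f (a ` {..<k})"
        using agree_if_phi_diff_in_U[OF g(1) f g(3)] by (simp add: mem_cylinder_range_a)
      then show "z \<in> phi ` N"
        using \<open>cylinder (range a) f (a ` {..<k}) \<subseteq> N\<close> g(2) by blast
    qed
    moreover have "openin (subtopology T (phi ` S)) W"
      unfolding W_def openin_subtopology
      using openin_translation_preimage[OF topological_group openin_U] by blast
    moreover have "y \<in> W"
      using f zero_in_U \<open>y = phi f\<close> by (simp add: W_def)
    ultimately show "\<exists>W. openin (subtopology T (phi ` S)) W \<and> y \<in> W \<and> W \<subseteq> phi ` N"
      by blast
  qed
qed

lemma contains_S_range_a: "contains_S T (range a)"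
proof -
  have "homeomorphic_map (S_topology T (range a)) (subtopology T (phi ` S)) phi"
    using continuous_map_phi inj_on_phi
    by (intro bijective_open_imp_homeomorphic_map open_map_phi)
      (auto simp: continuous_map_in_subtopology topspace_S_topology[OF topspace_UNIV] topspace_UNIV)
  then show ?thesis
    unfolding contains_S_def using phi_S_add inj_on_phi by blast
qed

end

lemma not_NSS_obtain_cyclic:
  assumes "\<not> NSS T" "openin T W" "0 \<in> W"
  obtains x where "x \<noteq> 0" "cyclic x \<subseteq> W"
proof -
  obtain H where "add_subgroup H" "H \<subseteq> W" "H \<noteq> {0}"
    using assms unfolding NSS_def by blast
  moreover from this obtain x where "x \<in> H" "x \<noteq> 0"
    by (auto simp: add_subgroup_def)
  ultimately show thesis
    using that cyclic_subset_add_subgroup by blast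
qed

text \<open>Since 0 is isolated in cyclic x, some neighbourhood Z of 0 meets cyclic x only in 0; the
  new neighbourhood W' is chosen with W' + W' + W' \<subseteq> W \<inter> Z \<inter> B.\<close>
lemma separating_step:
  assumes tg: "topological_ab_group T"
    and discrete: "\<And>x. subtopology T (cyclic x) = discrete_topology (cyclic x)"
    and "\<not> NSS T" and W: "openin T W" "0 \<in> W" and B: "openin T B" "0 \<in> B"
  obtains x W' where "x \<noteq> 0" "cyclic x \<subseteq> W" "openin T W'" "0 \<in> W'" "W' \<subseteq> B"
    "\<And>p q. p \<in> W' \<Longrightarrow> q \<in> W' \<Longrightarrow> p + q \<in> W"
    "\<And>p q r. p \<in> W' \<Longrightarrow> q \<in> W' \<Longrightarrow> r \<in> W' \<Longrightarrow> p + (q + r) \<in> cyclic x \<Longrightarrow> p + (q + r) = 0"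
proof -
  obtain x where x: "x \<noteq> 0" "cyclic x \<subseteq> W"
    using not_NSS_obtain_cyclic[OF \<open>\<not> NSS T\<close> W] .
  have "openin (subtopology T (cyclic x)) {0}"
    by (simp add: discrete zero_in_cyclic)
  then obtain Z where Z: "openin T Z" "{0} = Z \<inter> cyclic x"
    unfolding openin_subtopology by blast
  have "openin T (W \<inter> Z \<inter> B)" "0 \<in> W \<inter> Z \<inter> B"
    using W Z B by auto
  then obtain W1 where W1: "openin T W1" "0 \<in> W1"
    "\<And>p q. p \<in> W1 \<Longrightarrow> q \<in> W1 \<Longrightarrow> p + q \<in> W \<inter> Z \<inter> B"
    using topological_ab_group_half_neighbourhood[OF tg] by metis
  then obtain W2 where W2: "openin T W2" "0 \<in> W2"
    "\<And>p q. p \<in> W2 \<Longrightarrow> q \<in> W2 \<Longrightarrow> p + q \<in> W1"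
    using topological_ab_group_half_neighbourhood[OF tg] by metis
  have W2_W1: "W2 \<subseteq> W1" and W1_sub: "W1 \<subseteq> W \<inter> Z \<inter> B"
    using W1(2,3) W2(2,3) by (metis add.right_neutral subsetI)+
  show thesis
  proof (rule that[OF x W2(1,2)])
    show "W2 \<subseteq> B"
      using W2_W1 W1_sub by blast
    show "p + q \<in> W" if "p \<in> W2" "q \<in> W2" for p q
      using W2(3)[OF that] W1_sub by blast
    show "p + (q + r) = 0" if "p \<in> W2" "q \<in> W2" "r \<in> W2" "p + (q + r) \<in> cyclic x" for p q r
    proof -
      have "p + (q + r) \<in> Z"
        using W1(3)[of p "q + r"] W2(3)[of q r] W2_W1 that(1-3) by blast
      then show ?thesis
        using Z(2) that(4) by blast
    qed
  qed
qed

text \<open>U (k+1) is also shrunk into the k-th member of a countable base at 0, so that the U k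
  form a neighbourhood base of 0.\<close>
lemma not_NSS_imp_contains_S:
  fixes T :: "('a::ab_group_add) topology"
  assumes tg: "topological_ab_group T" and "metrizable_space T"
    and discrete: "\<And>x. subtopology T (cyclic x) = discrete_topology (cyclic x)"
    and "\<not> NSS T"
  shows "\<exists>A. infinite A \<and> contains_S T A"
proof -
  have top: "topspace T = UNIV"
    using tg by (rule topspace_topological_ab_group)
  have base_point: "first_countable T" "0 \<in> topspace T"
    using metrizable_imp_first_countable[OF \<open>metrizable_space T\<close>] by (simp_all add: top)
  obtain B :: "nat \<Rightarrow> 'a set" where B: "\<And>n. openin T (B n)" "\<And>n. 0 \<in> B n"
    and B_base: "\<And>V. openin T V \<Longrightarrow> 0 \<in> V \<Longrightarrow> \<exists>n. B n \<subseteq> V"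
    by (rule first_countable_nat_neighbourhood_base[OF base_point], rule that)
  define step where "step n W x W' \<longleftrightarrow>
      x \<noteq> 0 \<and> cyclic x \<subseteq> W \<and> openin T W' \<and> 0 \<in> W' \<and> W' \<subseteq> B n \<and>
      (\<forall>p\<in>W'. \<forall>q\<in>W'. p + q \<in> W) \<and>
      (\<forall>p\<in>W'. \<forall>q\<in>W'. \<forall>r\<in>W'. p + (q + r) \<in> cyclic x \<longrightarrow> p + (q + r) = 0)" for n W x W'
  have step_exists: "\<exists>W'. (openin T W' \<and> 0 \<in> W') \<and> (\<exists>x. step n W x W')"
    if W: "openin T W \<and> 0 \<in> W" for W n
  proof -
    obtain x W' where "x \<noteq> 0" "cyclic x \<subseteq> W" "openin T W'" "0 \<in> W'" "W' \<subseteq> B n"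
      "\<And>p q. p \<in> W' \<Longrightarrow> q \<in> W' \<Longrightarrow> p + q \<in> W"
      "\<And>p q r. p \<in> W' \<Longrightarrow> q \<in> W' \<Longrightarrow> r \<in> W' \<Longrightarrow> p + (q + r) \<in> cyclic x \<Longrightarrow> p + (q + r) = 0"
      by (rule separating_step[OF tg discrete \<open>\<not> NSS T\<close> W[THEN conjunct1] W[THEN conjunct2] B(1,2)],
          rule that)
    then have "step n W x W'"
      unfolding step_def by simp
    with \<open>openin T W'\<close> \<open>0 \<in> W'\<close> show ?thesis
      by blast
  qed
  have "\<exists>U. \<forall>n. (openin T (U n) \<and> 0 \<in> U n) \<and> (\<exists>x. step n (U n) x (U (Suc n)))"
  proof (rule dependent_nat_choice)
    show "\<exists>W. openin T W \<and> 0 \<in> W"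
      using openin_topspace[of T] top by blast
  qed (rule step_exists)
  then obtain U where U: "\<And>n. openin T (U n)" "\<And>n. 0 \<in> U n"
    "\<forall>n. \<exists>x. step n (U n) x (U (Suc n))"
    by blast
  then obtain a where a: "\<And>n. step n (U n) (a n) (U (Suc n))"
    using choice[OF U(3)] by blast
  interpret separating_sequence T U a
  proof
    show "\<And>V. openin T V \<Longrightarrow> 0 \<in> V \<Longrightarrow> \<exists>k. U k \<subseteq> V"
      using B_base a unfolding step_def by (metis order_trans)
  qed (use tg discrete U(1,2) a in \<open>auto simp: step_def\<close>)
  show ?thesis
    using range_inj_infinite[OF inj_a] contains_S_range_a by blast
qed

theorem theorem8p2:
  fixes T :: "('a::ab_group_add) topology"
  assumes "topological_ab_group T"
    and "metrizable_space T"
    and "\<And>a. subtopology T (cyclic a) = discrete_topology (cyclic a)"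
  shows "(\<exists>A. infinite A \<and> contains_S T A) \<longleftrightarrow> \<not> NSS T"
  using contains_S_imp_not_NSS[OF assms(1)] not_NSS_imp_contains_S[OF assms] by blast

end
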